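(* Let $(M,s)$ be an $\mathbf{S5}$-state such that every world $u\in M[S]$ is reachable from $s$, let $i$ be an agent and $\psi$ a fluent formula. Then $(M,s)\models\mathbf C(\mathbf B_i\psi\vee\mathbf B_i\neg\psi)$ iff for all $u,v\in M[S]$ with $(u,v)\in M[i]$ we have: $M[\pi](u)\models\psi$ iff $M[\pi](v)\models\psi$.
   Context: Agents $\mathcal{AG}=\{1,\dots,n\}$, fluents $\mathcal F$. Belief formulae are built from propositional (fluent) formulae over $\mathcal F$ with $\mathbf B_i$, Boolean connectives, $\mathbf E_\alpha,\mathbf C_\alpha$; $\mathbf C=\mathbf C_{\mathcal{AG}}$. Kripke structures $M$: worlds $M[S]$, interpretations $M[\pi](u)\subseteq\mathcal F$, relations $M[i]$; standard semantics ($\mathbf B_i\varphi$: $\varphi$ at all $M[i]$-successors; $\mathbf E_\alpha\varphi$: all $\mathbf B_i\varphi$, $i\in\alpha$; $\mathbf C_\alpha\varphi$: $\mathbf E_\alpha^k\varphi$ for all $k\ge0$). $(M,s)$ is an $\mathbf{S5}$-state if each $M[i]$ is an equivalence relation. $v$ is reachable from $u$ if connected to it by a finite (possibly empty) chain of pairs each in some $M[j]$. *)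

theory Defs
  imports Main
begin

datatype 'f fform =
    FAtom 'f
  | FTrue
  | FNot "'f fform"
  | FAnd "'f fform" "'f fform"
  | FOr "'f fform" "'f fform"

primrec fsat :: "'f set \<Rightarrow> 'f fform \<Rightarrow> bool" where
  "fsat I (FAtom p) = (p \<in> I)"
| "fsat I FTrue = True"
| "fsat I (FNot \<phi>) = (\<not> fsat I \<phi>)"
| "fsat I (FAnd \<phi> \<psi>) = (fsat I \<phi> \<and> fsat I \<psi>)"
| "fsat I (FOr \<phi> \<psi>) = (fsat I \<phi> \<or> fsat I \<psi>)"

datatype 'f bform =
    BFl "'f fform"
  | BB nat "'f bform"
  | BNot "'f bform"
  | BAnd "'f bform" "'f bform"
  | BOr "'f bform" "'f bform"
  | BE "nat set" "'f bform"
  | BC "nat set" "'f bform"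

record ('w, 'f) kripke =
  worlds :: "'w set"
  interp :: "'w \<Rightarrow> 'f set"
  rel :: "nat \<Rightarrow> ('w \<times> 'w) set"

text \<open>E^k_\<alpha> is expressed via the k-step reachability
  relation of the union of the relations of agents in \<alpha>: (M,u) |= E^k \<phi>
  iff \<phi> holds at all worlds reached by exactly k steps.\<close>
fun Ek_succ :: "('w, 'f) kripke \<Rightarrow> nat set \<Rightarrow> nat \<Rightarrow> 'w \<Rightarrow> 'w set" where
  "Ek_succ M \<alpha> 0 u = {u}"
| "Ek_succ M \<alpha> (Suc k) u = {w. \<exists>v \<in> Ek_succ M \<alpha> k u. \<exists>i\<in>\<alpha>. (v, w) \<in> rel M i}"

fun sat :: "('w, 'f) kripke \<Rightarrow> 'w \<Rightarrow> 'f bform \<Rightarrow> bool" where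
  "sat M u (BFl \<phi>) = fsat (interp M u) \<phi>"
| "sat M u (BB i \<phi>) = (\<forall>v. (u, v) \<in> rel M i \<longrightarrow> sat M v \<phi>)"
| "sat M u (BNot \<phi>) = (\<not> sat M u \<phi>)"
| "sat M u (BAnd \<phi> \<psi>) = (sat M u \<phi> \<and> sat M u \<psi>)"
| "sat M u (BOr \<phi> \<psi>) = (sat M u \<phi> \<or> sat M u \<psi>)"
| "sat M u (BE \<alpha> \<phi>) = (\<forall>i\<in>\<alpha>. \<forall>v. (u, v) \<in> rel M i \<longrightarrow> sat M v \<phi>)"
| "sat M u (BC \<alpha> \<phi>) = (\<forall>k. \<forall>v \<in> Ek_succ M \<alpha> k u. sat M v \<phi>)"

definition agents :: "nat \<Rightarrow> nat set" where
  "agents n = {1..n}"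

definition S5_state :: "nat \<Rightarrow> ('w, 'f) kripke \<Rightarrow> 'w \<Rightarrow> bool" where
  "S5_state n M s \<longleftrightarrow> s \<in> worlds M \<and>
     (\<forall>i \<in> agents n. equiv (worlds M) (rel M i))"

definition reachable :: "nat \<Rightarrow> ('w, 'f) kripke \<Rightarrow> 'w \<Rightarrow> 'w \<Rightarrow> bool" where
  "reachable n M u v \<longleftrightarrow> (u, v) \<in> (\<Union>j \<in> agents n. rel M j)\<^sup>*"

end

theory Submission
  imports Defs
begin

text \<open>Common belief of \<open>\<psi> \<or> \<not>\<psi>\<close> under \<open>\<B>\<^sub>i\<close> holds at \<open>s\<close> iff \<open>\<B>\<^sub>i\<psi> \<or> \<B>\<^sub>i\<not>\<psi>\<close> holds
  at every world reachable from \<open>s\<close>, i.e. at every world. At a world \<open>u\<close> that sees itself,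
  \<open>\<B>\<^sub>i\<psi> \<or> \<B>\<^sub>i\<not>\<psi>\<close> says exactly that \<open>\<psi>\<close> has the same value at \<open>u\<close> and all its
  \<open>i\<close>-successors.\<close>

lemma Ek_succ_eq_relpow: "Ek_succ M \<alpha> k u = ((\<Union>j\<in>\<alpha>. rel M j) ^^ k) `` {u}"
  by (induction k) auto

lemma sat_BC_iff_rtrancl:
  "sat M u (BC \<alpha> \<phi>) \<longleftrightarrow> (\<forall>v. (u, v) \<in> (\<Union>j\<in>\<alpha>. rel M j)\<^sup>* \<longrightarrow> sat M v \<phi>)"
  by (auto simp: Ek_succ_eq_relpow rtrancl_power)

lemma rtrancl_closed_worlds:
  assumes "\<forall>j\<in>\<alpha>. rel M j \<subseteq> worlds M \<times> worlds M"
    and "(u, v) \<in> (\<Union>j\<in>\<alpha>. rel M j)\<^sup>*" and "u \<in> worlds M"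
  shows "v \<in> worlds M"
  using assms(2,3) by induction (use assms(1) in blast)+

lemma sat_BC_generated_iff:
  assumes "\<forall>j\<in>agents n. rel M j \<subseteq> worlds M \<times> worlds M"
    and "s \<in> worlds M" and "\<forall>u \<in> worlds M. reachable n M s u"
  shows "sat M s (BC (agents n) \<phi>) \<longleftrightarrow> (\<forall>u \<in> worlds M. sat M u \<phi>)"
  unfolding sat_BC_iff_rtrancl
  using assms rtrancl_closed_worlds[OF assms(1) _ assms(2)] by (auto simp: reachable_def)

lemma sat_believes_whether_iff:
  assumes "(u, u) \<in> rel M i"
  shows "sat M u (BOr (BB i (BFl \<psi>)) (BB i (BFl (FNot \<psi>)))) \<longleftrightarrow>
    (\<forall>v. (u, v) \<in> rel M i \<longrightarrow> (fsat (interp M u) \<psi> \<longleftrightarrow> fsat (interp M v) \<psi>))"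
  using assms by auto

theorem lemma9:
  fixes n :: nat and M :: "('w, 'f) kripke" and s :: 'w and i :: nat and \<psi> :: "'f fform"
  assumes "S5_state n M s"
    and "\<forall>u \<in> worlds M. reachable n M s u"
    and "i \<in> agents n"
  shows "sat M s (BC (agents n) (BOr (BB i (BFl \<psi>)) (BB i (BFl (FNot \<psi>)))))
     \<longleftrightarrow> (\<forall>u \<in> worlds M. \<forall>v \<in> worlds M. (u, v) \<in> rel M i \<longrightarrow>
            (fsat (interp M u) \<psi> \<longleftrightarrow> fsat (interp M v) \<psi>))"
proof -
  have equiv_rels: "\<forall>j\<in>agents n. equiv (worlds M) (rel M j)" and "s \<in> worlds M"
    using assms(1) by (auto simp: S5_state_def)
  then have rels_in_worlds: "\<forall>j\<in>agents n. rel M j \<subseteq> worlds M \<times> worlds M"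
    by (auto dest: equiv_type)
  have "equiv (worlds M) (rel M i)"
    using equiv_rels assms(3) by blast
  then have refl_i: "\<And>u. u \<in> worlds M \<Longrightarrow> (u, u) \<in> rel M i"
    by (auto simp: equiv_def refl_on_def)
  have succ_in_worlds: "\<And>u v. (u, v) \<in> rel M i \<Longrightarrow> v \<in> worlds M"
    using rels_in_worlds assms(3) by blast
  have "sat M s (BC (agents n) (BOr (BB i (BFl \<psi>)) (BB i (BFl (FNot \<psi>)))))
      \<longleftrightarrow> (\<forall>u \<in> worlds M. sat M u (BOr (BB i (BFl \<psi>)) (BB i (BFl (FNot \<psi>)))))"
    using sat_BC_generated_iff[OF rels_in_worlds \<open>s \<in> worlds M\<close> assms(2)] .
  also have "\<dots> \<longleftrightarrow> (\<forall>u \<in> worlds M. \<forall>v. (u, v) \<in> rel M i \<longrightarrow>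
      (fsat (interp M u) \<psi> \<longleftrightarrow> fsat (interp M v) \<psi>))"
    by (intro ball_cong refl sat_believes_whether_iff refl_i)
  also have "\<dots> \<longleftrightarrow> (\<forall>u \<in> worlds M. \<forall>v \<in> worlds M. (u, v) \<in> rel M i \<longrightarrow>
      (fsat (interp M u) \<psi> \<longleftrightarrow> fsat (interp M v) \<psi>))"
    using succ_in_worlds by blast
  finally show ?thesis .
qed

end
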